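(* Assume $K$ is a perfect $A$-field. Let $\Phi$ and $\Psi$ be $\mathbf t$-modules over $K$. Then there is an isomorphism of $\mathbb F_q[t]$-modules $$\operatorname{Ext}^1_\tau(\Phi,\Psi)\cong\operatorname{Ext}^1_\sigma(\Psi^\sigma,\Phi^\sigma).$$
   Context: $A=\mathbb F_q[t]$; $K$ a perfect field of characteristic $p$ with $\mathbb F_q$-algebra map $\iota:A\to K$, $\theta=\iota(t)$. $K\{\tau\}$: twisted polynomials with $\tau x=x^q\tau$; $K\{\sigma\}$: twisted polynomials with $\sigma x=x^{(-1)}\sigma$, where $c^{(-k)}=c^{q^{-k}}$ and $c^{(k)}=c^{q^k}$. A $\mathbf t$-module of dimension $d$ is an $\mathbb F_q$-algebra homomorphism $\Phi:\mathbb F_q[t]\to\mathrm{Mat}_d(K\{\tau\})$ with $\Phi_t=(\theta I+N)+\sum_{i\ge1}M_i\tau^i$, $N$ nilpotent; a $\mathbf t^\sigma$-module is defined identically with $\sigma$ in place of $\tau$. Define $(-)^\sigma:K\{\tau\}\to K\{\sigma\}$ by $(\sum a_i\tau^i)^\sigma=\sum a_i^{(-i)}\sigma^i$, and for a $\mathbf t$-module $\Phi$ of dimension $d$ let $\Phi^\sigma:\mathbb F_q[t]\to\mathrm{Mat}_d(K\{\sigma\})$ be given by $\Phi^\sigma_a=$ the transpose of the matrix obtained by applying $(-)^\sigma$ entrywise to $\Phi_a$ (a $\mathbf t^\sigma$-module). For $\mathbf t$-modules (resp. $\mathbf t^\sigma$-modules) $\Phi$ of dim $d$, $\Psi$ of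 dim $e$: $\mathrm{Der}(\Phi,\Psi)$ is the space of $\mathbb F_q$-linear $\delta:\mathbb F_q[t]\to\mathrm{Mat}_{e\times d}(K\{\tau\})$ (resp. $K\{\sigma\}$) with $\delta(ab)=\Psi_a\delta(b)+\delta(a)\Phi_b$; inner biderivations are $\delta^{(U)}(a)=U\Phi_a-\Psi_aU$; $\operatorname{Ext}^1_\tau(\Phi,\Psi)$ (resp. $\operatorname{Ext}^1_\sigma(\Phi,\Psi)$) is $\mathrm{Der}(\Phi,\Psi)/\mathrm{Der}_{in}(\Phi,\Psi)$ with $\mathbb F_q[t]$-module structure $a*[\delta]=[\Psi_a\delta]$ (equivalently $[\delta\Phi_a]$); it is the group of extensions of $\Phi$ by $\Psi$ in the respective category. *)

theory Defs
  imports "HOL-Computational_Algebra.Polynomial"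
begin

(* Twisted polynomials over K (type 'a) are coefficient sequences nat => 'a
   (with finite support); the twist is an automorphism phi of K:
   (x * tau^i) * (y * tau^j) = x * (phi^^i) y * tau^(i+j). *)

definition frob :: "nat \<Rightarrow> 'a::field \<Rightarrow> 'a" where
  "frob q x = x ^ q"

definition tw_tau :: "nat \<Rightarrow> 'a::field \<Rightarrow> 'a" where
  "tw_tau q = frob q"

definition tw_sigma :: "nat \<Rightarrow> 'a::field \<Rightarrow> 'a" where
  "tw_sigma q = inv (frob q)"

(* F_q inside K and A = F_q[t] as polynomials with coefficients in F_q *)
definition Fq :: "nat \<Rightarrow> 'a::field set" where
  "Fq q = {x. x ^ q = x}"

definition Aq :: "nat \<Rightarrow> 'a::field poly set" where
  "Aq q = {a. \<forall>i. coeff a i \<in> Fq q}"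

definition tp_mult :: "('a \<Rightarrow> 'a) \<Rightarrow> (nat \<Rightarrow> 'a::field) \<Rightarrow> (nat \<Rightarrow> 'a) \<Rightarrow> nat \<Rightarrow> 'a" where
  "tp_mult phi f g = (\<lambda>n. \<Sum>i\<le>n. f i * (phi ^^ i) (g (n - i)))"

(* matrices with entries twisted polynomials: M i j n = coefficient of tau^n in entry (i,j) *)
type_synonym 'a tmat = "nat \<Rightarrow> nat \<Rightarrow> nat \<Rightarrow> 'a"

definition is_tmat :: "nat \<Rightarrow> nat \<Rightarrow> 'a::field tmat \<Rightarrow> bool" where
  "is_tmat m k M \<longleftrightarrow> (\<forall>i j. (m \<le> i \<or> k \<le> j) \<longrightarrow> M i j = (\<lambda>_. 0))
                      \<and> (\<forall>i j. finite {n. M i j n \<noteq> 0})"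

definition tm_zero :: "'a::field tmat" where
  "tm_zero = (\<lambda>i j n. 0)"

definition tm_id :: "nat \<Rightarrow> 'a::field tmat" where
  "tm_id d = (\<lambda>i j n. if i = j \<and> i < d \<and> n = 0 then 1 else 0)"

definition tm_add :: "'a::field tmat \<Rightarrow> 'a tmat \<Rightarrow> 'a tmat" where
  "tm_add M N = (\<lambda>i j n. M i j n + N i j n)"

definition tm_diff :: "'a::field tmat \<Rightarrow> 'a tmat \<Rightarrow> 'a tmat" where
  "tm_diff M N = (\<lambda>i j n. M i j n - N i j n)"

definition tm_scal :: "'a::field \<Rightarrow> 'a tmat \<Rightarrow> 'a tmat" where
  "tm_scal c M = (\<lambda>i j n. c * M i j n)"

definition tm_mult :: "('a \<Rightarrow> 'a) \<Rightarrow> nat \<Rightarrow> 'a::field tmat \<Rightarrow> 'a tmat \<Rightarrow> 'a tmat" where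
  "tm_mult phi k M N = (\<lambda>i j n. \<Sum>l<k. tp_mult phi (M i l) (N l j) n)"

definition km_mult :: "nat \<Rightarrow> (nat \<Rightarrow> nat \<Rightarrow> 'a::field) \<Rightarrow> (nat \<Rightarrow> nat \<Rightarrow> 'a) \<Rightarrow> nat \<Rightarrow> nat \<Rightarrow> 'a" where
  "km_mult d X Y = (\<lambda>i j. \<Sum>l<d. X i l * Y l j)"

fun km_pow :: "nat \<Rightarrow> (nat \<Rightarrow> nat \<Rightarrow> 'a::field) \<Rightarrow> nat \<Rightarrow> nat \<Rightarrow> nat \<Rightarrow> 'a" where
  "km_pow d X 0 = (\<lambda>i j. if i = j then 1 else 0)"
| "km_pow d X (Suc k) = km_mult d X (km_pow d X k)"

(* A t-module (phi = tw_tau q) or t^sigma-module (phi = tw_sigma q) of dimension d: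
   an F_q-algebra homomorphism F_q[t] -> Mat_d(K{phi}) (extended by 0 outside A),
   with Phi_t = (theta I + N) + sum_{i>=1} M_i tau^i, N nilpotent. *)
definition tw_module :: "('a \<Rightarrow> 'a) \<Rightarrow> nat \<Rightarrow> 'a::field \<Rightarrow> nat \<Rightarrow> ('a poly \<Rightarrow> 'a tmat) \<Rightarrow> bool" where
  "tw_module phi q \<theta> d Phi \<longleftrightarrow>
     (\<forall>a. a \<notin> Aq q \<longrightarrow> Phi a = tm_zero)
   \<and> (\<forall>a\<in>Aq q. is_tmat d d (Phi a))
   \<and> Phi 1 = tm_id d
   \<and> (\<forall>a\<in>Aq q. \<forall>b\<in>Aq q. Phi (a + b) = tm_add (Phi a) (Phi b))
   \<and> (\<forall>a\<in>Aq q. \<forall>b\<in>Aq q. Phi (a * b) = tm_mult phi d (Phi a) (Phi b))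
   \<and> (\<forall>c\<in>Fq q. \<forall>a\<in>Aq q. Phi (smult c a) = tm_scal c (Phi a))
   \<and> (\<exists>k. \<forall>i<d. \<forall>j<d.
        km_pow d (\<lambda>i j. Phi [:0, 1:] i j 0 - (if i = j then \<theta> else 0)) k i j = 0)"

definition t_module :: "nat \<Rightarrow> 'a::field \<Rightarrow> nat \<Rightarrow> ('a poly \<Rightarrow> 'a tmat) \<Rightarrow> bool" where
  "t_module q \<theta> d Phi = tw_module (tw_tau q) q \<theta> d Phi"

(* (-)^sigma : sum a_i tau^i  |->  sum a_i^(q^-i) sigma^i, and Phi^sigma = transpose *)
definition sigma_map :: "nat \<Rightarrow> (nat \<Rightarrow> 'a::field) \<Rightarrow> nat \<Rightarrow> 'a" where
  "sigma_map q f = (\<lambda>i. (inv (frob q) ^^ i) (f i))"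

definition sigma_dual :: "nat \<Rightarrow> ('a::field poly \<Rightarrow> 'a tmat) \<Rightarrow> 'a poly \<Rightarrow> 'a tmat" where
  "sigma_dual q Phi = (\<lambda>a i j. sigma_map q (Phi a j i))"

definition Der :: "('a \<Rightarrow> 'a) \<Rightarrow> nat \<Rightarrow> nat \<Rightarrow> nat \<Rightarrow> ('a::field poly \<Rightarrow> 'a tmat) \<Rightarrow> ('a poly \<Rightarrow> 'a tmat)
                   \<Rightarrow> ('a poly \<Rightarrow> 'a tmat) set" where
  "Der phi q d e Phi Psi = {\<delta>.
      (\<forall>a. a \<notin> Aq q \<longrightarrow> \<delta> a = tm_zero)
    \<and> (\<forall>a\<in>Aq q. is_tmat e d (\<delta> a))
    \<and> (\<forall>a\<in>Aq q. \<forall>b\<in>Aq q. \<delta> (a + b) = tm_add (\<delta> a) (\<delta> b))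
    \<and> (\<forall>c\<in>Fq q. \<forall>a\<in>Aq q. \<delta> (smult c a) = tm_scal c (\<delta> a))
    \<and> (\<forall>a\<in>Aq q. \<forall>b\<in>Aq q.
         \<delta> (a * b) = tm_add (tm_mult phi e (Psi a) (\<delta> b)) (tm_mult phi d (\<delta> a) (Phi b)))}"

definition Der_in :: "('a \<Rightarrow> 'a) \<Rightarrow> nat \<Rightarrow> nat \<Rightarrow> nat \<Rightarrow> ('a::field poly \<Rightarrow> 'a tmat) \<Rightarrow> ('a poly \<Rightarrow> 'a tmat)
                   \<Rightarrow> ('a poly \<Rightarrow> 'a tmat) set" where
  "Der_in phi q d e Phi Psi = {\<delta>. \<exists>U. is_tmat e d U \<and>
      \<delta> = (\<lambda>a. if a \<in> Aq q then tm_diff (tm_mult phi d U (Phi a)) (tm_mult phi e (Psi a) U)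
                else tm_zero)}"

definition ext_rel :: "('a \<Rightarrow> 'a) \<Rightarrow> nat \<Rightarrow> nat \<Rightarrow> nat \<Rightarrow> ('a::field poly \<Rightarrow> 'a tmat) \<Rightarrow> ('a poly \<Rightarrow> 'a tmat)
                   \<Rightarrow> (('a poly \<Rightarrow> 'a tmat) \<times> ('a poly \<Rightarrow> 'a tmat)) set" where
  "ext_rel phi q d e Phi Psi = {(x, y). x \<in> Der phi q d e Phi Psi \<and> y \<in> Der phi q d e Phi Psi
      \<and> (\<lambda>a. tm_diff (x a) (y a)) \<in> Der_in phi q d e Phi Psi}"

definition Ext1 :: "('a \<Rightarrow> 'a) \<Rightarrow> nat \<Rightarrow> nat \<Rightarrow> nat \<Rightarrow> ('a::field poly \<Rightarrow> 'a tmat) \<Rightarrow> ('a poly \<Rightarrow> 'a tmat)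
                   \<Rightarrow> ('a poly \<Rightarrow> 'a tmat) set set" where
  "Ext1 phi q d e Phi Psi = Der phi q d e Phi Psi // ext_rel phi q d e Phi Psi"

definition ext_add :: "('a \<Rightarrow> 'a) \<Rightarrow> nat \<Rightarrow> nat \<Rightarrow> nat \<Rightarrow> ('a::field poly \<Rightarrow> 'a tmat) \<Rightarrow> ('a poly \<Rightarrow> 'a tmat)
                   \<Rightarrow> ('a poly \<Rightarrow> 'a tmat) set \<Rightarrow> ('a poly \<Rightarrow> 'a tmat) set \<Rightarrow> ('a poly \<Rightarrow> 'a tmat) set" where
  "ext_add phi q d e Phi Psi X Y = ext_rel phi q d e Phi Psi ``
      {\<lambda>a. tm_add ((SOME \<delta>. \<delta> \<in> X) a) ((SOME \<delta>. \<delta> \<in> Y) a)}"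

definition ext_smul :: "('a \<Rightarrow> 'a) \<Rightarrow> nat \<Rightarrow> nat \<Rightarrow> nat \<Rightarrow> ('a::field poly \<Rightarrow> 'a tmat) \<Rightarrow> ('a poly \<Rightarrow> 'a tmat)
                   \<Rightarrow> 'a poly \<Rightarrow> ('a poly \<Rightarrow> 'a tmat) set \<Rightarrow> ('a poly \<Rightarrow> 'a tmat) set" where
  "ext_smul phi q d e Phi Psi a X = ext_rel phi q d e Phi Psi ``
      {\<lambda>b. tm_mult phi e (Psi a) ((SOME \<delta>. \<delta> \<in> X) b)}"

definition ext_iso ::
  "nat \<Rightarrow> ('a \<Rightarrow> 'a) \<Rightarrow> nat \<Rightarrow> nat \<Rightarrow> ('a::field poly \<Rightarrow> 'a tmat) \<Rightarrow> ('a poly \<Rightarrow> 'a tmat)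
   \<Rightarrow> ('a \<Rightarrow> 'a) \<Rightarrow> nat \<Rightarrow> nat \<Rightarrow> ('a poly \<Rightarrow> 'a tmat) \<Rightarrow> ('a poly \<Rightarrow> 'a tmat) \<Rightarrow> bool" where
  "ext_iso q phi d e Phi Psi phi' d' e' Phi' Psi' \<longleftrightarrow>
     (\<exists>F. bij_betw F (Ext1 phi q d e Phi Psi) (Ext1 phi' q d' e' Phi' Psi')
        \<and> (\<forall>X\<in>Ext1 phi q d e Phi Psi. \<forall>Y\<in>Ext1 phi q d e Phi Psi.
              F (ext_add phi q d e Phi Psi X Y) = ext_add phi' q d' e' Phi' Psi' (F X) (F Y))
        \<and> (\<forall>a\<in>Aq q. \<forall>X\<in>Ext1 phi q d e Phi Psi.
              F (ext_smul phi q d e Phi Psi a X) = ext_smul phi' q d' e' Phi' Psi' a (F X)))"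

end

theory Submission
  imports Defs "HOL-Computational_Algebra.Primes"
begin

text \<open>For a matrix \<open>M\<close> over \<open>K{\<tau>}\<close> let \<open>M\<^sup>*\<close> be its transpose with \<open>\<psi>\<^sup>n\<close> applied to the
  coefficient of \<open>\<tau>\<^sup>n\<close> in every entry, where \<open>\<psi>\<close> is the inverse of the Frobenius \<open>\<phi>\<close>; for
  a \<open>t\<close>-module this gives \<open>\<Phi>\<^sup>\<sigma>\<close>. Since \<open>\<psi>\<close> undoes the twist, \<open>(M N)\<^sup>* = N\<^sup>* M\<^sup>*\<close> with
  the right-hand product taken in \<open>K{\<sigma>}\<close>. Hence \<open>\<delta> \<mapsto> \<delta>\<^sup>*\<close> maps biderivations of
  \<open>(\<Phi>, \<Psi>)\<close> bijectively onto those of \<open>(\<Psi>\<^sup>\<sigma>, \<Phi>\<^sup>\<sigma>)\<close> and the inner biderivation of \<open>U\<close>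
  onto that of \<open>- U\<^sup>*\<close>, so it induces an additive bijection of the \<open>Ext\<^sup>1\<close> groups. It is
  \<open>F\<^sub>q[t]\<close>-linear because \<open>\<Psi>\<^sub>a \<delta>\<close> and \<open>\<delta> \<Phi>\<^sub>a\<close> both represent \<open>a * [\<delta>]\<close>, and
  \<open>(\<delta> \<Phi>\<^sub>a)\<^sup>* = \<Phi>\<^sub>a\<^sup>\<sigma> \<delta>\<^sup>*\<close>.\<close>

definition add_mult_hom :: "('a::field \<Rightarrow> 'a) \<Rightarrow> bool" where
  "add_mult_hom f \<longleftrightarrow> (\<forall>x y. f (x + y) = f x + f y) \<and> (\<forall>x y. f (x * y) = f x * f y)"

lemma add_mult_hom_add: "add_mult_hom f \<Longrightarrow> f (x + y) = f x + f y"
  by (simp add: add_mult_hom_def)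

lemma add_mult_hom_mult: "add_mult_hom f \<Longrightarrow> f (x * y) = f x * f y"
  by (simp add: add_mult_hom_def)

lemma add_mult_hom_zero: "add_mult_hom f \<Longrightarrow> f 0 = 0"
  using add_mult_hom_add[of f 0 0] by (metis add.right_neutral add_cancel_right_right)

lemma add_mult_hom_minus: "add_mult_hom f \<Longrightarrow> f (- x) = - f x"
  using add_mult_hom_add[of f x "- x"] add_mult_hom_zero[of f]
  by (metis minus_unique add.right_inverse)

lemma add_mult_hom_diff: "add_mult_hom f \<Longrightarrow> f (x - y) = f x - f y"
  using add_mult_hom_add[of f x "- y"] add_mult_hom_minus[of f y] by simp

lemma add_mult_hom_sum: "add_mult_hom f \<Longrightarrow> f (sum g S) = (\<Sum>s\<in>S. f (g s))"
  by (induction S rule: infinite_finite_induct) (auto simp: add_mult_hom_zero add_mult_hom_add)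

lemma add_mult_hom_funpow: "add_mult_hom f \<Longrightarrow> add_mult_hom (f ^^ n)"
  by (induction n) (auto simp: add_mult_hom_def)

lemma add_mult_hom_inverse:
  assumes "add_mult_hom f" and "\<And>x. g (f x) = x" and "\<And>x. f (g x) = x"
  shows "add_mult_hom g"
  unfolding add_mult_hom_def
  by (metis assms add_mult_hom_add add_mult_hom_mult)

lemma funpow_fixed: "f c = c \<Longrightarrow> (f ^^ n) c = c"
  by (induction n) auto

lemma funpow_left_inverse:
  fixes f g :: "'a \<Rightarrow> 'a"
  assumes "\<And>x. g (f x) = x"
  shows "(g ^^ n) ((f ^^ n) x) = x"
proof (induction n arbitrary: x)
  case (Suc n)
  have "(g ^^ Suc n) ((f ^^ Suc n) x) = (g ^^ n) (g (f ((f ^^ n) x)))"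
    by (simp only: funpow_Suc_right[of n g] funpow.simps(2)[of n f] o_apply)
  then show ?case using Suc assms by simp
qed simp

lemma funpow_left_inverse_le:
  fixes f g :: "'a \<Rightarrow> 'a"
  assumes "\<And>x. g (f x) = x" and "i \<le> n"
  shows "(g ^^ n) ((f ^^ i) x) = (g ^^ (n - i)) x"
proof -
  have "g ^^ n = (g ^^ (n - i)) \<circ> (g ^^ i)"
    using assms(2) by (simp add: funpow_add[symmetric])
  then show ?thesis using funpow_left_inverse[of g f, OF assms(1)] by simp
qed

lemma rel_some_in_class:
  assumes "equiv A R" and "x \<in> A"
  shows "(x, SOME y. y \<in> R `` {x}) \<in> R"
proof -
  have "x \<in> R `` {x}" using assms equiv_class_self by metis
  then show ?thesis by (metis Image_singleton_iff some_eq_imp)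
qed

lemma image_equiv_class:
  assumes "\<And>x y. (x, y) \<in> R \<Longrightarrow> (g x, g y) \<in> S" and "\<And>x y. (x, y) \<in> S \<Longrightarrow> (h x, h y) \<in> R"
    and "\<And>x. h (g x) = x" and "\<And>y. g (h y) = y"
  shows "g ` (R `` {x}) = S `` {g x}"
proof
  show "g ` (R `` {x}) \<subseteq> S `` {g x}" using assms(1) by blast
  show "S `` {g x} \<subseteq> g ` (R `` {x})"
  proof
    fix y assume "y \<in> S `` {g x}"
    then have "(x, h y) \<in> R" using assms(2)[of "g x" y] assms(3) by simp
    then show "y \<in> g ` (R `` {x})" using assms(4)[of y] by (metis Image_singleton_iff image_eqI)
  qed
qed

lemma bij_betw_image_quotient:
  assumes "\<And>x. x \<in> A \<Longrightarrow> g x \<in> B" and "\<And>y. y \<in> B \<Longrightarrow> h y \<in> A"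
    and "\<And>x y. (x, y) \<in> R \<Longrightarrow> (g x, g y) \<in> S" and "\<And>x y. (x, y) \<in> S \<Longrightarrow> (h x, h y) \<in> R"
    and "\<And>x. h (g x) = x" and "\<And>y. g (h y) = y"
  shows "bij_betw (image g) (A // R) (B // S)"
proof (rule bij_betw_imageI)
  have "inj g" by (metis assms(5) injI)
  then show "inj_on (image g) (A // R)" by (simp add: inj_on_def inj_image_eq_iff)
  have image_class: "g ` (R `` {x}) = S `` {g x}" for x
    by (rule image_equiv_class[OF assms(3-6)])
  show "image g ` (A // R) = B // S"
  proof
    show "image g ` (A // R) \<subseteq> B // S"
      using assms(1) by (auto simp: image_class intro!: quotientI elim!: quotientE)
    show "B // S \<subseteq> image g ` (A // R)"
    proof
      fix Y assume "Y \<in> B // S"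
      then obtain y where "y \<in> B" and Y: "Y = S `` {y}" by (rule quotientE)
      then have "R `` {h y} \<in> A // R" using assms(2) by (simp add: quotientI)
      moreover have "Y = g ` (R `` {h y})" using Y by (simp add: image_class assms(6))
      ultimately show "Y \<in> image g ` (A // R)" by blast
    qed
  qed
qed

subsection \<open>Twisted polynomials\<close>

lemma tp_mult_add_left: "tp_mult phi (\<lambda>n. f n + g n) h n = tp_mult phi f h n + tp_mult phi g h n"
  by (simp add: tp_mult_def distrib_right sum.distrib)

lemma tp_mult_add_right:
  "add_mult_hom phi \<Longrightarrow> tp_mult phi f (\<lambda>n. g n + h n) n = tp_mult phi f g n + tp_mult phi f h n"
  by (simp add: tp_mult_def add_mult_hom_add[OF add_mult_hom_funpow] distrib_left sum.distrib)

lemma tp_mult_minus_left: "tp_mult phi (\<lambda>n. - f n) h n = - tp_mult phi f h n"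
  by (simp add: tp_mult_def sum_negf)

lemma tp_mult_minus_right:
  "add_mult_hom phi \<Longrightarrow> tp_mult phi f (\<lambda>n. - g n) n = - tp_mult phi f g n"
  by (simp add: tp_mult_def add_mult_hom_minus[OF add_mult_hom_funpow] sum_negf)

lemma tp_mult_diff_right:
  "add_mult_hom phi \<Longrightarrow> tp_mult phi f (\<lambda>n. g n - h n) n = tp_mult phi f g n - tp_mult phi f h n"
  by (simp add: tp_mult_def add_mult_hom_diff[OF add_mult_hom_funpow] right_diff_distrib
      sum_subtractf)

lemma tp_mult_zero_left: "tp_mult phi (\<lambda>n. 0) h n = 0"
  by (simp add: tp_mult_def)

lemma tp_mult_zero_right: "add_mult_hom phi \<Longrightarrow> tp_mult phi f (\<lambda>n. 0) n = 0"
  by (simp add: tp_mult_def add_mult_hom_zero[OF add_mult_hom_funpow])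

lemma tp_mult_scal_left: "tp_mult phi (\<lambda>n. c * f n) h n = c * tp_mult phi f h n"
  by (simp add: tp_mult_def sum_distrib_left mult.assoc)

lemma tp_mult_scal_right:
  "add_mult_hom phi \<Longrightarrow> phi c = c \<Longrightarrow> tp_mult phi f (\<lambda>n. c * g n) n = c * tp_mult phi f g n"
  by (simp add: tp_mult_def add_mult_hom_mult[OF add_mult_hom_funpow] funpow_fixed
      sum_distrib_left mult_ac)

lemma tp_mult_sum_left: "tp_mult phi (\<lambda>n. \<Sum>s\<in>S. F s n) h n = (\<Sum>s\<in>S. tp_mult phi (F s) h n)"
  unfolding tp_mult_def by (simp add: sum_distrib_right sum.swap[of _ S])

lemma tp_mult_sum_right:
  "add_mult_hom phi \<Longrightarrow> tp_mult phi f (\<lambda>n. \<Sum>s\<in>S. F s n) n = (\<Sum>s\<in>S. tp_mult phi f (F s) n)"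
  unfolding tp_mult_def
  by (simp add: add_mult_hom_sum[OF add_mult_hom_funpow] sum_distrib_left sum.swap[of _ S])

lemma tp_mult_assoc:
  assumes "add_mult_hom phi"
  shows "tp_mult phi (tp_mult phi f g) h n = tp_mult phi f (tp_mult phi g h) n"
proof -
  define T where "T j k = f j * (phi ^^ j) (g k) * (phi ^^ (j + k)) (h (n - j - k))" for j k
  have "tp_mult phi (tp_mult phi f g) h n = (\<Sum>i\<le>n. \<Sum>j\<le>i. T j (i - j))"
    by (simp add: tp_mult_def T_def sum_distrib_right)
  also have "\<dots> = (\<Sum>(j, k)\<in>{(j, k). j + k \<le> n}. T j k)"
    by (rule sum.triangle_reindex_eq[symmetric])
  also have "{(j, k). j + k \<le> n} = Sigma {..n} (\<lambda>j. {..n - j})"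
    by auto
  also have "(\<Sum>(j, k)\<in>Sigma {..n} (\<lambda>j. {..n - j}). T j k) = (\<Sum>j\<le>n. \<Sum>k\<le>n - j. T j k)"
    by (rule sum.Sigma[symmetric]) auto
  also have "\<dots> = tp_mult phi f (tp_mult phi g h) n"
    unfolding tp_mult_def T_def
    by (intro sum.cong refl)
       (simp add: add_mult_hom_sum[OF add_mult_hom_funpow[OF assms]]
          add_mult_hom_mult[OF add_mult_hom_funpow[OF assms]] sum_distrib_left
          funpow_add mult.assoc diff_diff_add)
  finally show ?thesis .
qed

lemma tp_mult_conj_reverse:
  assumes "add_mult_hom psi" and "\<And>x. psi (phi x) = x"
  shows "(psi ^^ n) (tp_mult phi f g n)
       = tp_mult psi (\<lambda>i. (psi ^^ i) (g i)) (\<lambda>i. (psi ^^ i) (f i)) n"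
proof -
  have hom: "add_mult_hom (psi ^^ k)" for k
    by (rule add_mult_hom_funpow[OF assms(1)])
  have "(psi ^^ n) (tp_mult phi f g n) = (\<Sum>i\<le>n. (psi ^^ n) (f i) * (psi ^^ (n - i)) (g (n - i)))"
    unfolding tp_mult_def
    by (simp add: add_mult_hom_sum[OF hom] add_mult_hom_mult[OF hom]
        funpow_left_inverse_le[of psi phi, OF assms(2)])
  also have "\<dots> = (\<Sum>i\<le>n. (psi ^^ n) (f (n - i)) * (psi ^^ i) (g i))"
    by (rule sum.reindex_bij_witness[where i="\<lambda>i. n - i" and j="\<lambda>i. n - i"]) auto
  also have "\<dots> = tp_mult psi (\<lambda>i. (psi ^^ i) (g i)) (\<lambda>i. (psi ^^ i) (f i)) n"
    unfolding tp_mult_def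
    by (intro sum.cong refl)
       (metis (no_types, lifting) funpow_add le_add_diff_inverse o_apply mult.commute atMost_iff)
  finally show ?thesis .
qed

lemma finite_support_tp_mult:
  assumes "add_mult_hom phi" and "finite {n. f n \<noteq> 0}" and "finite {n. g n \<noteq> 0}"
  shows "finite {n. tp_mult phi f g n \<noteq> 0}"
proof -
  obtain A where A: "\<And>n. f n \<noteq> 0 \<Longrightarrow> n \<le> A"
    using assms(2) finite_nat_set_iff_bounded_le by auto
  obtain B where B: "\<And>n. g n \<noteq> 0 \<Longrightarrow> n \<le> B"
    using assms(3) finite_nat_set_iff_bounded_le by auto
  have "tp_mult phi f g n = 0" if "A + B < n" for n
    unfolding tp_mult_def
  proof (intro sum.neutral ballI)
    fix i assume "i \<in> {..n}"
    show "f i * (phi ^^ i) (g (n - i)) = 0"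
    proof (cases "i \<le> A")
      case True
      then have "g (n - i) = 0" using B that by fastforce
      then show ?thesis using add_mult_hom_zero[OF add_mult_hom_funpow[OF assms(1)]] by simp
    qed (use A in fastforce)
  qed
  then have "{n. tp_mult phi f g n \<noteq> 0} \<subseteq> {..A + B}"
    by (auto simp: not_less[symmetric])
  then show ?thesis by (rule finite_subset) simp
qed

subsection \<open>Matrices over twisted polynomials\<close>

definition tm_neg :: "'a::field tmat \<Rightarrow> 'a tmat" where
  "tm_neg M = (\<lambda>i j n. - M i j n)"

lemma tm_mult_add_left:
  "tm_mult phi k (tm_add M N) P = tm_add (tm_mult phi k M P) (tm_mult phi k N P)"
  by (simp add: tm_mult_def tm_add_def tp_mult_add_left sum.distrib)

lemma tm_mult_add_right:
  "add_mult_hom phi \<Longrightarrow> tm_mult phi k P (tm_add M N) = tm_add (tm_mult phi k P M) (tm_mult phi k P N)"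
  by (simp add: tm_mult_def tm_add_def tp_mult_add_right sum.distrib)

lemma tm_mult_diff_right:
  "add_mult_hom phi \<Longrightarrow>
     tm_mult phi k P (tm_diff M N) = tm_diff (tm_mult phi k P M) (tm_mult phi k P N)"
  by (simp add: tm_mult_def tm_diff_def tp_mult_diff_right sum_subtractf)

lemma tm_mult_neg_left: "tm_mult phi k (tm_neg M) P = tm_neg (tm_mult phi k M P)"
  by (simp add: tm_mult_def tm_neg_def tp_mult_minus_left sum_negf)

lemma tm_mult_neg_right:
  "add_mult_hom phi \<Longrightarrow> tm_mult phi k P (tm_neg M) = tm_neg (tm_mult phi k P M)"
  by (simp add: tm_mult_def tm_neg_def tp_mult_minus_right sum_negf)

lemma tm_mult_zero_left: "tm_mult phi k tm_zero P = tm_zero"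
  by (simp add: tm_mult_def tm_zero_def tp_mult_zero_left)

lemma tm_mult_zero_right: "add_mult_hom phi \<Longrightarrow> tm_mult phi k P tm_zero = tm_zero"
  by (simp add: tm_mult_def tm_zero_def tp_mult_zero_right)

lemma tm_mult_scal_left: "tm_mult phi k (tm_scal c M) P = tm_scal c (tm_mult phi k M P)"
  by (simp add: tm_mult_def tm_scal_def tp_mult_scal_left sum_distrib_left)

lemma tm_mult_scal_right:
  "add_mult_hom phi \<Longrightarrow> phi c = c \<Longrightarrow> tm_mult phi k P (tm_scal c M) = tm_scal c (tm_mult phi k P M)"
  by (simp add: tm_mult_def tm_scal_def tp_mult_scal_right sum_distrib_left)

lemma tm_mult_assoc:
  assumes "add_mult_hom phi"
  shows "tm_mult phi k2 (tm_mult phi k1 M N) P = tm_mult phi k1 M (tm_mult phi k2 N P)"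
proof (intro ext)
  fix i j n
  have "tm_mult phi k2 (tm_mult phi k1 M N) P i j n
      = (\<Sum>l<k2. \<Sum>l'<k1. tp_mult phi (M i l') (tp_mult phi (N l' l) (P l j)) n)"
    unfolding tm_mult_def by (simp add: tp_mult_sum_left tp_mult_assoc[OF assms])
  also have "\<dots> = (\<Sum>l'<k1. \<Sum>l<k2. tp_mult phi (M i l') (tp_mult phi (N l' l) (P l j)) n)"
    by (rule sum.swap)
  also have "\<dots> = tm_mult phi k1 M (tm_mult phi k2 N P) i j n"
    unfolding tm_mult_def by (simp add: tp_mult_sum_right[OF assms])
  finally show "tm_mult phi k2 (tm_mult phi k1 M N) P i j n
      = tm_mult phi k1 M (tm_mult phi k2 N P) i j n" .
qed

lemma tm_diff_self: "tm_diff M M = tm_zero"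
  by (simp add: tm_diff_def tm_zero_def)

lemma tm_diff_zero: "tm_diff tm_zero tm_zero = tm_zero"
  by (simp add: tm_diff_def tm_zero_def)

lemma tm_add_zero: "tm_add tm_zero tm_zero = tm_zero"
  by (simp add: tm_add_def tm_zero_def)

lemma tm_neg_diff: "tm_neg (tm_diff A B) = tm_diff B A"
  by (simp add: tm_diff_def tm_neg_def)

lemma tm_diff_neg_neg: "tm_diff (tm_neg A) (tm_neg B) = tm_diff B A"
  by (simp add: tm_diff_def tm_neg_def)

lemma tm_diff_add_diff: "tm_add (tm_diff A B) (tm_diff B C) = tm_diff A C"
  by (simp add: tm_diff_def tm_add_def)

lemma tm_add_diff_diff: "tm_add (tm_diff A B) (tm_diff C D) = tm_diff (tm_add A C) (tm_add B D)"
  by (simp add: tm_diff_def tm_add_def fun_eq_iff algebra_simps)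

lemma tm_add_commute: "tm_add A B = tm_add B A"
  by (simp add: tm_add_def fun_eq_iff algebra_simps)

lemma tm_add_add_swap: "tm_add (tm_add A B) (tm_add C D) = tm_add (tm_add A C) (tm_add B D)"
  by (simp add: tm_add_def fun_eq_iff algebra_simps)

lemma tm_scal_add: "tm_scal c (tm_add A B) = tm_add (tm_scal c A) (tm_scal c B)"
  by (simp add: tm_add_def tm_scal_def fun_eq_iff algebra_simps)

lemma tm_add_eq_imp_diff_eq: "tm_add A B = tm_add C D \<Longrightarrow> tm_diff A D = tm_diff C B"
  by (simp add: tm_add_def tm_diff_def fun_eq_iff) (metis add_diff_cancel diff_add_eq)

lemma is_tmat_zero: "is_tmat m k tm_zero"
  by (simp add: is_tmat_def tm_zero_def)

lemma is_tmat_map2: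
  assumes "is_tmat m k M" and "is_tmat m k N" and "h 0 0 = 0"
  shows "is_tmat m k (\<lambda>i j n. h (M i j n) (N i j n))"
  unfolding is_tmat_def
proof (intro conjI allI impI)
  fix i j assume "m \<le> i \<or> k \<le> j"
  then show "(\<lambda>n. h (M i j n) (N i j n)) = (\<lambda>_. 0)"
    using assms unfolding is_tmat_def by auto
next
  fix i j
  have "{n. h (M i j n) (N i j n) \<noteq> 0} \<subseteq> {n. M i j n \<noteq> 0} \<union> {n. N i j n \<noteq> 0}"
    using assms(3) by auto
  then show "finite {n. h (M i j n) (N i j n) \<noteq> 0}"
    using assms(1,2) unfolding is_tmat_def by (auto intro: finite_subset)
qed

lemma is_tmat_add: "is_tmat m k M \<Longrightarrow> is_tmat m k N \<Longrightarrow> is_tmat m k (tm_add M N)"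
  unfolding tm_add_def by (rule is_tmat_map2) simp_all

lemma is_tmat_neg: "is_tmat m k M \<Longrightarrow> is_tmat m k (tm_neg M)"
  unfolding tm_neg_def by (rule is_tmat_map2[where h="\<lambda>x _. - x"]) simp_all

lemma is_tmat_mult:
  assumes "add_mult_hom phi" and "is_tmat m k M" and "is_tmat k l N"
  shows "is_tmat m l (tm_mult phi k M N)"
  unfolding is_tmat_def
proof (intro conjI allI impI)
  fix i j assume "m \<le> i \<or> l \<le> j"
  then show "tm_mult phi k M N i j = (\<lambda>_. 0)"
    using assms unfolding is_tmat_def tm_mult_def
    by (auto simp: tp_mult_zero_left tp_mult_zero_right)
next
  fix i j
  have "finite {n. tp_mult phi (M i l) (N l j) n \<noteq> 0}" for l
    using finite_support_tp_mult[OF assms(1)] assms(2,3) unfolding is_tmat_def by blast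
  then have "finite (\<Union>l<k. {n. tp_mult phi (M i l) (N l j) n \<noteq> 0})"
    by blast
  moreover have "{n. tm_mult phi k M N i j n \<noteq> 0} \<subseteq> (\<Union>l<k. {n. tp_mult phi (M i l) (N l j) n \<noteq> 0})"
    unfolding tm_mult_def by (auto intro: ccontr simp: sum.neutral)
  ultimately show "finite {n. tm_mult phi k M N i j n \<noteq> 0}"
    by (rule finite_subset[rotated])
qed

subsection \<open>The twisted transpose\<close>

definition tm_dual :: "('a \<Rightarrow> 'a) \<Rightarrow> 'a::field tmat \<Rightarrow> 'a tmat" where
  "tm_dual psi M = (\<lambda>i j n. (psi ^^ n) (M j i n))"

definition twisted_dual :: "('a \<Rightarrow> 'a) \<Rightarrow> ('a::field poly \<Rightarrow> 'a tmat) \<Rightarrow> 'a poly \<Rightarrow> 'a tmat" where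
  "twisted_dual psi Phi = (\<lambda>a. tm_dual psi (Phi a))"

lemma sigma_dual_eq_twisted_dual: "sigma_dual q Phi = twisted_dual (inv (frob q)) Phi"
  by (simp add: sigma_dual_def sigma_map_def twisted_dual_def tm_dual_def)

lemma tm_dual_add:
  "add_mult_hom psi \<Longrightarrow> tm_dual psi (tm_add M N) = tm_add (tm_dual psi M) (tm_dual psi N)"
  by (simp add: tm_dual_def tm_add_def add_mult_hom_add[OF add_mult_hom_funpow])

lemma tm_dual_diff:
  "add_mult_hom psi \<Longrightarrow> tm_dual psi (tm_diff M N) = tm_diff (tm_dual psi M) (tm_dual psi N)"
  by (simp add: tm_dual_def tm_diff_def add_mult_hom_diff[OF add_mult_hom_funpow])

lemma tm_dual_zero: "add_mult_hom psi \<Longrightarrow> tm_dual psi tm_zero = tm_zero"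
  by (simp add: tm_dual_def tm_zero_def add_mult_hom_zero[OF add_mult_hom_funpow])

lemma tm_dual_scal:
  "add_mult_hom psi \<Longrightarrow> psi c = c \<Longrightarrow> tm_dual psi (tm_scal c M) = tm_scal c (tm_dual psi M)"
  by (simp add: tm_dual_def tm_scal_def add_mult_hom_mult[OF add_mult_hom_funpow] funpow_fixed)

lemma tm_dual_mult:
  assumes "add_mult_hom psi" and "\<And>x. psi (phi x) = x"
  shows "tm_dual psi (tm_mult phi k M N) = tm_mult psi k (tm_dual psi N) (tm_dual psi M)"
  unfolding tm_dual_def tm_mult_def
  by (simp add: add_mult_hom_sum[OF add_mult_hom_funpow[OF assms(1)]]
      tp_mult_conj_reverse[of psi phi, OF assms] mult.commute)

lemma tm_dual_tm_dual:
  fixes phi psi :: "'a::field \<Rightarrow> 'a"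
  assumes "\<And>x. phi (psi x) = x"
  shows "tm_dual phi (tm_dual psi M) = M"
  unfolding tm_dual_def by (simp add: funpow_left_inverse[of phi psi, OF assms])

lemma twisted_dual_twisted_dual:
  fixes phi psi :: "'a::field \<Rightarrow> 'a"
  assumes "\<And>x. phi (psi x) = x"
  shows "twisted_dual phi (twisted_dual psi Phi) = Phi"
  unfolding twisted_dual_def by (simp add: tm_dual_tm_dual[of phi psi, OF assms])

lemma twisted_dual_add:
  "add_mult_hom psi \<Longrightarrow> twisted_dual psi (\<lambda>a. tm_add (x a) (y a))
     = (\<lambda>a. tm_add (twisted_dual psi x a) (twisted_dual psi y a))"
  by (simp add: twisted_dual_def tm_dual_add)

lemma twisted_dual_mult_right:
  assumes "add_mult_hom psi" and "\<And>x. psi (phi x) = x"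
  shows "twisted_dual psi (\<lambda>b. tm_mult phi d (x b) (Phi a))
       = (\<lambda>b. tm_mult psi d (twisted_dual psi Phi a) (twisted_dual psi x b))"
  by (simp add: twisted_dual_def tm_dual_mult[OF assms])

lemma is_tmat_dual:
  assumes "add_mult_hom psi" and "is_tmat m k M"
  shows "is_tmat k m (tm_dual psi M)"
  unfolding is_tmat_def
proof (intro conjI allI impI)
  fix i j assume "k \<le> i \<or> m \<le> j"
  then show "tm_dual psi M i j = (\<lambda>_. 0)"
    using assms(2) add_mult_hom_zero[OF add_mult_hom_funpow[OF assms(1)]]
    unfolding is_tmat_def tm_dual_def by auto
next
  fix i j
  have "{n. tm_dual psi M i j n \<noteq> 0} \<subseteq> {n. M j i n \<noteq> 0}"
    using add_mult_hom_zero[OF add_mult_hom_funpow[OF assms(1)]] unfolding tm_dual_def by auto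
  then show "finite {n. tm_dual psi M i j n \<noteq> 0}"
    using assms(2) unfolding is_tmat_def by (auto intro: finite_subset)
qed

subsection \<open>Biderivations and extensions\<close>

definition inner_der ::
  "('a \<Rightarrow> 'a) \<Rightarrow> nat \<Rightarrow> nat \<Rightarrow> ('a::field poly \<Rightarrow> 'a tmat) \<Rightarrow> ('a poly \<Rightarrow> 'a tmat) \<Rightarrow> 'a tmat
   \<Rightarrow> 'a poly \<Rightarrow> 'a tmat" where
  "inner_der phi d e Phi Psi U a = tm_diff (tm_mult phi d U (Phi a)) (tm_mult phi e (Psi a) U)"

definition tmat_rep :: "('a::field \<Rightarrow> 'a) \<Rightarrow> nat \<Rightarrow> nat \<Rightarrow> ('a poly \<Rightarrow> 'a tmat) \<Rightarrow> bool" where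
  "tmat_rep phi q d Phi \<longleftrightarrow> (\<forall>a\<in>Aq q. is_tmat d d (Phi a))
     \<and> (\<forall>a\<in>Aq q. \<forall>b\<in>Aq q. Phi (a * b) = tm_mult phi d (Phi a) (Phi b))"

lemma tw_module_imp_tmat_rep: "tw_module phi q \<theta> d Phi \<Longrightarrow> tmat_rep phi q d Phi"
  unfolding tw_module_def tmat_rep_def by blast

lemma tmat_rep_is_tmat: "tmat_rep phi q d Phi \<Longrightarrow> a \<in> Aq q \<Longrightarrow> is_tmat d d (Phi a)"
  unfolding tmat_rep_def by blast

lemma tmat_rep_commute:
  assumes "tmat_rep phi q d Phi" and "a \<in> Aq q" and "b \<in> Aq q"
  shows "tm_mult phi d (Phi a) (Phi b) = tm_mult phi d (Phi b) (Phi a)"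
  using assms unfolding tmat_rep_def by (metis mult.commute)

lemma DerD:
  assumes "\<delta> \<in> Der phi q d e Phi Psi"
  shows "\<And>a. a \<notin> Aq q \<Longrightarrow> \<delta> a = tm_zero"
    and "\<And>a. a \<in> Aq q \<Longrightarrow> is_tmat e d (\<delta> a)"
    and "\<And>a b. a \<in> Aq q \<Longrightarrow> b \<in> Aq q \<Longrightarrow> \<delta> (a + b) = tm_add (\<delta> a) (\<delta> b)"
    and "\<And>c a. c \<in> Fq q \<Longrightarrow> a \<in> Aq q \<Longrightarrow> \<delta> (smult c a) = tm_scal c (\<delta> a)"
    and "\<And>a b. a \<in> Aq q \<Longrightarrow> b \<in> Aq q \<Longrightarrow>
         \<delta> (a * b) = tm_add (tm_mult phi e (Psi a) (\<delta> b)) (tm_mult phi d (\<delta> a) (Phi b))"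
  using assms unfolding Der_def by blast+

lemma ext_relE:
  assumes "(x, y) \<in> ext_rel phi q d e Phi Psi"
  obtains U where "x \<in> Der phi q d e Phi Psi" and "y \<in> Der phi q d e Phi Psi" and "is_tmat e d U"
    and "\<And>a. a \<in> Aq q \<Longrightarrow> tm_diff (x a) (y a) = inner_der phi d e Phi Psi U a"
proof -
  from assms obtain U where "x \<in> Der phi q d e Phi Psi" "y \<in> Der phi q d e Phi Psi" "is_tmat e d U"
    and eq: "(\<lambda>a. tm_diff (x a) (y a))
           = (\<lambda>a. if a \<in> Aq q then inner_der phi d e Phi Psi U a else tm_zero)"
    unfolding ext_rel_def Der_in_def inner_der_def by blast
  moreover have "tm_diff (x a) (y a) = inner_der phi d e Phi Psi U a" if "a \<in> Aq q" for a
    using fun_cong[OF eq, of a] that by simp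
  ultimately show thesis using that by blast
qed

lemma ext_relI:
  assumes "x \<in> Der phi q d e Phi Psi" and "y \<in> Der phi q d e Phi Psi" and "is_tmat e d U"
    and "\<And>a. a \<in> Aq q \<Longrightarrow> tm_diff (x a) (y a) = inner_der phi d e Phi Psi U a"
  shows "(x, y) \<in> ext_rel phi q d e Phi Psi"
proof -
  have "(\<lambda>a. tm_diff (x a) (y a))
      = (\<lambda>a. if a \<in> Aq q then inner_der phi d e Phi Psi U a else tm_zero)"
    using assms(4) DerD(1)[OF assms(1)] DerD(1)[OF assms(2)] by (auto simp: tm_diff_zero)
  then show ?thesis
    using assms(1-3) unfolding ext_rel_def Der_in_def inner_der_def by blast
qed

lemma inner_der_zero: "add_mult_hom phi \<Longrightarrow> inner_der phi d e Phi Psi tm_zero a = tm_zero"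
  by (simp add: inner_der_def tm_mult_zero_left tm_mult_zero_right tm_diff_zero)

lemma inner_der_neg:
  "add_mult_hom phi \<Longrightarrow>
     inner_der phi d e Phi Psi (tm_neg U) a = tm_neg (inner_der phi d e Phi Psi U a)"
  by (simp add: inner_der_def tm_mult_neg_left tm_mult_neg_right) (simp add: tm_diff_def tm_neg_def)

lemma inner_der_add:
  "add_mult_hom phi \<Longrightarrow> inner_der phi d e Phi Psi (tm_add U V) a
     = tm_add (inner_der phi d e Phi Psi U a) (inner_der phi d e Phi Psi V a)"
  by (simp add: inner_der_def tm_mult_add_left tm_mult_add_right tm_add_diff_diff)

lemma equiv_ext_rel:
  assumes "add_mult_hom phi"
  shows "equiv (Der phi q d e Phi Psi) (ext_rel phi q d e Phi Psi)"
proof (rule equivI)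
  show "ext_rel phi q d e Phi Psi \<subseteq> Der phi q d e Phi Psi \<times> Der phi q d e Phi Psi"
    unfolding ext_rel_def by blast
next
  show "refl_on (Der phi q d e Phi Psi) (ext_rel phi q d e Phi Psi)"
    by (rule refl_onI, rule ext_relI[OF _ _ is_tmat_zero])
       (simp_all add: tm_diff_self inner_der_zero[OF assms])
next
  show "sym (ext_rel phi q d e Phi Psi)"
  proof (rule symI)
    fix x y assume "(x, y) \<in> ext_rel phi q d e Phi Psi"
    then obtain U where "x \<in> Der phi q d e Phi Psi" "y \<in> Der phi q d e Phi Psi" "is_tmat e d U"
      and U: "\<And>a. a \<in> Aq q \<Longrightarrow> tm_diff (x a) (y a) = inner_der phi d e Phi Psi U a"
      by (rule ext_relE) blast+
    then show "(y, x) \<in> ext_rel phi q d e Phi Psi"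
      by (intro ext_relI[OF _ _ is_tmat_neg])
         (simp_all only: tm_neg_diff[of "x _" "y _", symmetric] U inner_der_neg[OF assms])
  qed
next
  show "trans (ext_rel phi q d e Phi Psi)"
  proof (rule transI)
    fix x y z
    assume "(x, y) \<in> ext_rel phi q d e Phi Psi" and "(y, z) \<in> ext_rel phi q d e Phi Psi"
    then obtain U V where x: "x \<in> Der phi q d e Phi Psi" and z: "z \<in> Der phi q d e Phi Psi"
      and "is_tmat e d U" "is_tmat e d V"
      and U: "\<And>a. a \<in> Aq q \<Longrightarrow> tm_diff (x a) (y a) = inner_der phi d e Phi Psi U a"
      and V: "\<And>a. a \<in> Aq q \<Longrightarrow> tm_diff (y a) (z a) = inner_der phi d e Phi Psi V a"
      by (metis ext_relE)
    show "(x, z) \<in> ext_rel phi q d e Phi Psi"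
    proof (rule ext_relI[OF x z is_tmat_add])
      fix a :: "'a poly" assume a: "a \<in> Aq q"
      have "tm_diff (x a) (z a) = tm_add (tm_diff (x a) (y a)) (tm_diff (y a) (z a))"
        by (rule tm_diff_add_diff[symmetric])
      also have "\<dots> = inner_der phi d e Phi Psi (tm_add U V) a"
        by (simp add: U[OF a] V[OF a] inner_der_add[OF assms])
      finally show "tm_diff (x a) (z a) = inner_der phi d e Phi Psi (tm_add U V) a" .
    qed fact+
  qed
qed

lemma Der_add:
  assumes "add_mult_hom phi" and "x \<in> Der phi q d e Phi Psi" and "y \<in> Der phi q d e Phi Psi"
  shows "(\<lambda>a. tm_add (x a) (y a)) \<in> Der phi q d e Phi Psi"
  unfolding Der_def
  using DerD[OF assms(2)] DerD[OF assms(3)]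
  by (auto simp: tm_add_zero is_tmat_add tm_add_add_swap tm_scal_add
      tm_mult_add_left tm_mult_add_right[OF assms(1)])

lemma ext_rel_add:
  assumes "add_mult_hom phi"
    and "(x, x') \<in> ext_rel phi q d e Phi Psi" and "(y, y') \<in> ext_rel phi q d e Phi Psi"
  shows "((\<lambda>a. tm_add (x a) (y a)), (\<lambda>a. tm_add (x' a) (y' a))) \<in> ext_rel phi q d e Phi Psi"
proof -
  obtain U where "x \<in> Der phi q d e Phi Psi" "x' \<in> Der phi q d e Phi Psi" "is_tmat e d U"
    and U: "\<And>a. a \<in> Aq q \<Longrightarrow> tm_diff (x a) (x' a) = inner_der phi d e Phi Psi U a"
    using assms(2) by (rule ext_relE) blast+
  moreover obtain V where "y \<in> Der phi q d e Phi Psi" "y' \<in> Der phi q d e Phi Psi" "is_tmat e d V"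
    and V: "\<And>a. a \<in> Aq q \<Longrightarrow> tm_diff (y a) (y' a) = inner_der phi d e Phi Psi V a"
    using assms(3) by (rule ext_relE) blast+
  ultimately show ?thesis
    by (intro ext_relI[OF Der_add Der_add is_tmat_add, OF assms(1) _ _ assms(1)])
       (simp_all add: tm_add_diff_diff[symmetric] U V inner_der_add[OF assms(1)])
qed

lemma Der_mult_left:
  assumes "add_mult_hom phi" and "\<And>c. c \<in> Fq q \<Longrightarrow> phi c = c"
    and "tmat_rep phi q e Psi" and "a \<in> Aq q" and "\<delta> \<in> Der phi q d e Phi Psi"
  shows "(\<lambda>b. tm_mult phi e (Psi a) (\<delta> b)) \<in> Der phi q d e Phi Psi"
proof -
  have "tm_mult phi e (Psi a) (\<delta> (b * c))
      = tm_add (tm_mult phi e (Psi b) (tm_mult phi e (Psi a) (\<delta> c)))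
          (tm_mult phi d (tm_mult phi e (Psi a) (\<delta> b)) (Phi c))"
    if "b \<in> Aq q" and "c \<in> Aq q" for b c
    using that DerD(5)[OF assms(5) that]
    by (simp add: tm_mult_add_right[OF assms(1)] tm_mult_assoc[OF assms(1), symmetric]
        tmat_rep_commute[OF assms(3,4)])
  then show ?thesis
    unfolding Der_def
    using DerD[OF assms(5)] assms(2) tmat_rep_is_tmat[OF assms(3,4)]
    by (auto simp: tm_mult_zero_right[OF assms(1)] is_tmat_mult[OF assms(1)]
        tm_mult_add_right[OF assms(1)] tm_mult_scal_right[OF assms(1)])
qed

lemma Der_mult_right:
  assumes "add_mult_hom phi" and "tmat_rep phi q d Phi" and "a \<in> Aq q"
    and "\<delta> \<in> Der phi q d e Phi Psi"
  shows "(\<lambda>b. tm_mult phi d (\<delta> b) (Phi a)) \<in> Der phi q d e Phi Psi"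
proof -
  have "tm_mult phi d (\<delta> (b * c)) (Phi a)
      = tm_add (tm_mult phi e (Psi b) (tm_mult phi d (\<delta> c) (Phi a)))
          (tm_mult phi d (tm_mult phi d (\<delta> b) (Phi a)) (Phi c))"
    if "b \<in> Aq q" and "c \<in> Aq q" for b c
    using that DerD(5)[OF assms(4) that]
    by (simp add: tm_mult_add_left tm_mult_assoc[OF assms(1)]
        tmat_rep_commute[OF assms(2) _ assms(3)])
  then show ?thesis
    unfolding Der_def
    using DerD[OF assms(4)] tmat_rep_is_tmat[OF assms(2,3)]
    by (auto simp: tm_mult_zero_left is_tmat_mult[OF assms(1)] tm_mult_add_left tm_mult_scal_left)
qed

lemma inner_der_mult_left:
  assumes "add_mult_hom phi" and "tmat_rep phi q e Psi" and "a \<in> Aq q" and "b \<in> Aq q"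
  shows "tm_mult phi e (Psi a) (inner_der phi d e Phi Psi U b)
       = inner_der phi d e Phi Psi (tm_mult phi e (Psi a) U) b"
  unfolding inner_der_def
  by (simp add: tm_mult_diff_right[OF assms(1)] tm_mult_assoc[OF assms(1), symmetric]
      tmat_rep_commute[OF assms(2,3,4)])

lemma ext_rel_mult_left:
  assumes "add_mult_hom phi" and "\<And>c. c \<in> Fq q \<Longrightarrow> phi c = c"
    and "tmat_rep phi q e Psi" and "a \<in> Aq q" and "(x, y) \<in> ext_rel phi q d e Phi Psi"
  shows "((\<lambda>b. tm_mult phi e (Psi a) (x b)), (\<lambda>b. tm_mult phi e (Psi a) (y b)))
           \<in> ext_rel phi q d e Phi Psi"
proof -
  obtain U where "x \<in> Der phi q d e Phi Psi" "y \<in> Der phi q d e Phi Psi" "is_tmat e d U"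
    and U: "\<And>b. b \<in> Aq q \<Longrightarrow> tm_diff (x b) (y b) = inner_der phi d e Phi Psi U b"
    using assms(5) by (rule ext_relE) blast+
  then show ?thesis
    by (intro ext_relI[OF Der_mult_left Der_mult_left
          is_tmat_mult[OF assms(1) tmat_rep_is_tmat[OF assms(3,4)]]])
       (simp_all add: assms tm_mult_diff_right[OF assms(1), symmetric] U
         inner_der_mult_left[OF assms(1,3,4)])
qed

text \<open>The witness is \<open>- \<delta> a\<close>, from comparing \<open>\<delta> (a * b)\<close> with \<open>\<delta> (b * a)\<close>.\<close>

lemma ext_rel_mult_left_right:
  assumes "add_mult_hom phi" and "\<And>c. c \<in> Fq q \<Longrightarrow> phi c = c"
    and "tmat_rep phi q e Psi" and "tmat_rep phi q d Phi" and "a \<in> Aq q"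
    and "\<delta> \<in> Der phi q d e Phi Psi"
  shows "((\<lambda>b. tm_mult phi e (Psi a) (\<delta> b)), (\<lambda>b. tm_mult phi d (\<delta> b) (Phi a)))
           \<in> ext_rel phi q d e Phi Psi"
proof (rule ext_relI[OF Der_mult_left[OF assms(1-3,5,6)] Der_mult_right[OF assms(1,4-6)]
      is_tmat_neg[OF DerD(2)[OF assms(6,5)]]])
  fix b :: "'a poly" assume b: "b \<in> Aq q"
  have "tm_add (tm_mult phi e (Psi a) (\<delta> b)) (tm_mult phi d (\<delta> a) (Phi b))
      = tm_add (tm_mult phi e (Psi b) (\<delta> a)) (tm_mult phi d (\<delta> b) (Phi a))"
    using DerD(5)[OF assms(6) assms(5) b] DerD(5)[OF assms(6) b assms(5)]
    by (simp add: mult.commute)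
  then have "tm_diff (tm_mult phi e (Psi a) (\<delta> b)) (tm_mult phi d (\<delta> b) (Phi a))
      = tm_diff (tm_mult phi e (Psi b) (\<delta> a)) (tm_mult phi d (\<delta> a) (Phi b))"
    by (rule tm_add_eq_imp_diff_eq)
  then show "tm_diff (tm_mult phi e (Psi a) (\<delta> b)) (tm_mult phi d (\<delta> b) (Phi a))
      = inner_der phi d e Phi Psi (tm_neg (\<delta> a)) b"
    by (simp add: inner_der_def tm_mult_neg_left tm_mult_neg_right[OF assms(1)] tm_diff_neg_neg)
qed

lemma ext_add_classes:
  assumes "add_mult_hom phi" and "x \<in> Der phi q d e Phi Psi" and "y \<in> Der phi q d e Phi Psi"
  shows "ext_add phi q d e Phi Psi
           (ext_rel phi q d e Phi Psi `` {x}) (ext_rel phi q d e Phi Psi `` {y})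
       = ext_rel phi q d e Phi Psi `` {\<lambda>a. tm_add (x a) (y a)}"
proof -
  let ?R = "ext_rel phi q d e Phi Psi"
  have "(x, SOME z. z \<in> ?R `` {x}) \<in> ?R" and "(y, SOME z. z \<in> ?R `` {y}) \<in> ?R"
    using rel_some_in_class[OF equiv_ext_rel[OF assms(1)]] assms(2,3) by blast+
  then have "((\<lambda>a. tm_add (x a) (y a)),
      (\<lambda>a. tm_add ((SOME z. z \<in> ?R `` {x}) a) ((SOME z. z \<in> ?R `` {y}) a))) \<in> ?R"
    by (rule ext_rel_add[OF assms(1)])
  then show ?thesis
    unfolding ext_add_def by (rule equiv_class_eq[OF equiv_ext_rel[OF assms(1)], symmetric])
qed

lemma ext_smul_class:
  assumes "add_mult_hom phi" and "\<And>c. c \<in> Fq q \<Longrightarrow> phi c = c"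
    and "tmat_rep phi q e Psi" and "a \<in> Aq q" and "x \<in> Der phi q d e Phi Psi"
  shows "ext_smul phi q d e Phi Psi a (ext_rel phi q d e Phi Psi `` {x})
       = ext_rel phi q d e Phi Psi `` {\<lambda>b. tm_mult phi e (Psi a) (x b)}"
proof -
  let ?R = "ext_rel phi q d e Phi Psi"
  have "(x, SOME z. z \<in> ?R `` {x}) \<in> ?R"
    using rel_some_in_class[OF equiv_ext_rel[OF assms(1)] assms(5)] .
  then have "((\<lambda>b. tm_mult phi e (Psi a) (x b)),
      (\<lambda>b. tm_mult phi e (Psi a) ((SOME z. z \<in> ?R `` {x}) b))) \<in> ?R"
    using ext_rel_mult_left[OF assms(1-4)] by blast
  then show ?thesis
    unfolding ext_smul_def by (rule equiv_class_eq[OF equiv_ext_rel[OF assms(1)], symmetric])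
qed

subsection \<open>Duality of extensions\<close>

lemma tmat_rep_twisted_dual:
  assumes "add_mult_hom psi" and "\<And>x. psi (phi x) = x" and "tmat_rep phi q d Phi"
  shows "tmat_rep psi q d (twisted_dual psi Phi)"
proof -
  have "tm_dual psi (Phi (a * b)) = tm_mult psi d (tm_dual psi (Phi a)) (tm_dual psi (Phi b))"
    if "a \<in> Aq q" and "b \<in> Aq q" for a b
  proof -
    have "Phi (a * b) = tm_mult phi d (Phi b) (Phi a)"
      using assms(3) that unfolding tmat_rep_def by (metis mult.commute)
    then show ?thesis by (simp add: tm_dual_mult[OF assms(1,2)])
  qed
  then show ?thesis
    using assms(3) is_tmat_dual[OF assms(1)] unfolding tmat_rep_def twisted_dual_def by blast
qed

lemma Der_twisted_dual:
  fixes phi psi :: "'a::field \<Rightarrow> 'a"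
  assumes "add_mult_hom psi" and "\<And>x. psi (phi x) = x" and "\<And>c. c \<in> Fq q \<Longrightarrow> psi c = c"
    and "\<delta> \<in> Der phi q d e Phi Psi"
  shows "twisted_dual psi \<delta> \<in> Der psi q e d (twisted_dual psi Psi) (twisted_dual psi Phi)"
proof -
  have "tm_dual psi (\<delta> (a * b))
      = tm_add (tm_mult psi d (tm_dual psi (Phi a)) (tm_dual psi (\<delta> b)))
          (tm_mult psi e (tm_dual psi (\<delta> a)) (tm_dual psi (Psi b)))"
    if "a \<in> Aq q" and "b \<in> Aq q" for a b
    using DerD(5)[OF assms(4) that(2,1)]
    by (simp add: mult.commute tm_dual_add[OF assms(1)] tm_dual_mult[OF assms(1,2)] tm_add_commute)
  then show ?thesis
    unfolding Der_def twisted_dual_def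
    using DerD[OF assms(4)] assms(3)
    by (auto simp: tm_dual_zero[OF assms(1)] is_tmat_dual[OF assms(1)] tm_dual_add[OF assms(1)]
        tm_dual_scal[OF assms(1)])
qed

lemma tm_dual_inner_der:
  assumes "add_mult_hom psi" and "\<And>x. psi (phi x) = x"
  shows "tm_dual psi (inner_der phi d e Phi Psi U a)
       = inner_der psi e d (twisted_dual psi Psi) (twisted_dual psi Phi) (tm_neg (tm_dual psi U)) a"
  by (simp add: inner_der_def twisted_dual_def tm_dual_diff[OF assms(1)] tm_dual_mult[OF assms]
      tm_mult_neg_left tm_mult_neg_right[OF assms(1)] tm_diff_neg_neg)

lemma ext_rel_twisted_dual:
  fixes phi psi :: "'a::field \<Rightarrow> 'a"
  assumes "add_mult_hom psi" and "\<And>x. psi (phi x) = x" and "\<And>c. c \<in> Fq q \<Longrightarrow> psi c = c"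
    and "(x, y) \<in> ext_rel phi q d e Phi Psi"
  shows "(twisted_dual psi x, twisted_dual psi y)
           \<in> ext_rel psi q e d (twisted_dual psi Psi) (twisted_dual psi Phi)"
proof -
  obtain U where "x \<in> Der phi q d e Phi Psi" "y \<in> Der phi q d e Phi Psi" "is_tmat e d U"
    and U: "\<And>a. a \<in> Aq q \<Longrightarrow> tm_diff (x a) (y a) = inner_der phi d e Phi Psi U a"
    using assms(4) by (rule ext_relE) blast+
  then show ?thesis
    by (intro ext_relI[OF Der_twisted_dual Der_twisted_dual is_tmat_neg[OF is_tmat_dual]])
       (simp_all add: assms(1-3) twisted_dual_def tm_dual_diff[OF assms(1), symmetric] U
         tm_dual_inner_der[OF assms(1,2)])
qed

locale twisted_duality =
  fixes phi psi :: "'a::field \<Rightarrow> 'a" and q d e :: nat and Phi Psi :: "'a poly \<Rightarrow> 'a tmat"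
  assumes hom: "add_mult_hom phi"
    and psi_phi: "\<And>x. psi (phi x) = x" and phi_psi: "\<And>x. phi (psi x) = x"
    and fixes_Fq: "\<And>c. c \<in> Fq q \<Longrightarrow> phi c = c"
    and Phi: "tmat_rep phi q d Phi" and Psi: "tmat_rep phi q e Psi"
begin

abbreviation "Phi_dual \<equiv> twisted_dual psi Phi"
abbreviation "Psi_dual \<equiv> twisted_dual psi Psi"

lemma hom_psi: "add_mult_hom psi"
  by (rule add_mult_hom_inverse[OF hom psi_phi phi_psi])

lemma psi_fixes_Fq: "c \<in> Fq q \<Longrightarrow> psi c = c"
  by (metis fixes_Fq psi_phi)

lemma twisted_dual_inverse:
  "twisted_dual phi (twisted_dual psi x) = x" "twisted_dual psi (twisted_dual phi y) = y"
  by (simp_all add: twisted_dual_twisted_dual phi_psi psi_phi)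

lemma Der_dual: "x \<in> Der phi q d e Phi Psi \<Longrightarrow> twisted_dual psi x \<in> Der psi q e d Psi_dual Phi_dual"
  by (rule Der_twisted_dual[OF hom_psi psi_phi psi_fixes_Fq])

lemma Der_dual_inverse:
  assumes "y \<in> Der psi q e d Psi_dual Phi_dual"
  shows "twisted_dual phi y \<in> Der phi q d e Phi Psi"
  using Der_twisted_dual[where q=q, OF hom phi_psi fixes_Fq assms]
  by (simp only: twisted_dual_inverse)

lemma ext_rel_dual:
  "(x, y) \<in> ext_rel phi q d e Phi Psi
     \<Longrightarrow> (twisted_dual psi x, twisted_dual psi y) \<in> ext_rel psi q e d Psi_dual Phi_dual"
  by (rule ext_rel_twisted_dual[OF hom_psi psi_phi psi_fixes_Fq])

lemma ext_rel_dual_inverse: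
  assumes "(x, y) \<in> ext_rel psi q e d Psi_dual Phi_dual"
  shows "(twisted_dual phi x, twisted_dual phi y) \<in> ext_rel phi q d e Phi Psi"
  using ext_rel_twisted_dual[where q=q, OF hom phi_psi fixes_Fq assms]
  by (simp only: twisted_dual_inverse)

lemma image_dual_class:
  "twisted_dual psi ` (ext_rel phi q d e Phi Psi `` {x})
     = ext_rel psi q e d Psi_dual Phi_dual `` {twisted_dual psi x}"
  by (rule image_equiv_class[where h="twisted_dual phi"])
     (simp_all add: ext_rel_dual ext_rel_dual_inverse twisted_dual_inverse)

lemma bij_betw_image_dual:
  "bij_betw (image (twisted_dual psi)) (Ext1 phi q d e Phi Psi) (Ext1 psi q e d Psi_dual Phi_dual)"
  unfolding Ext1_def
  by (rule bij_betw_image_quotient[where h="twisted_dual phi"])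
     (simp_all add: Der_dual Der_dual_inverse ext_rel_dual ext_rel_dual_inverse
        twisted_dual_inverse)

lemma image_dual_ext_add:
  assumes "X \<in> Ext1 phi q d e Phi Psi" and "Y \<in> Ext1 phi q d e Phi Psi"
  shows "twisted_dual psi ` ext_add phi q d e Phi Psi X Y
       = ext_add psi q e d Psi_dual Phi_dual (twisted_dual psi ` X) (twisted_dual psi ` Y)"
proof -
  let ?R = "ext_rel phi q d e Phi Psi" and ?R' = "ext_rel psi q e d Psi_dual Phi_dual"
  obtain x where x: "X = ?R `` {x}" "x \<in> Der phi q d e Phi Psi"
    using assms(1) unfolding Ext1_def by (rule quotientE)
  obtain y where y: "Y = ?R `` {y}" "y \<in> Der phi q d e Phi Psi"
    using assms(2) unfolding Ext1_def by (rule quotientE)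
  have "twisted_dual psi ` ext_add phi q d e Phi Psi X Y
      = twisted_dual psi ` (?R `` {\<lambda>a. tm_add (x a) (y a)})"
    by (simp only: x y ext_add_classes[OF hom])
  also have "\<dots> = ?R' `` {\<lambda>a. tm_add (twisted_dual psi x a) (twisted_dual psi y a)}"
    by (simp only: image_dual_class twisted_dual_add[OF hom_psi])
  also have "\<dots> = ext_add psi q e d Psi_dual Phi_dual
      (?R' `` {twisted_dual psi x}) (?R' `` {twisted_dual psi y})"
    by (rule ext_add_classes[OF hom_psi Der_dual[OF x(2)] Der_dual[OF y(2)], symmetric])
  finally show ?thesis by (simp only: x y image_dual_class)
qed

lemma image_dual_ext_smul:
  assumes a: "a \<in> Aq q" and "X \<in> Ext1 phi q d e Phi Psi"
  shows "twisted_dual psi ` ext_smul phi q d e Phi Psi a X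
       = ext_smul psi q e d Psi_dual Phi_dual a (twisted_dual psi ` X)"
proof -
  let ?R = "ext_rel phi q d e Phi Psi" and ?R' = "ext_rel psi q e d Psi_dual Phi_dual"
  obtain x where x: "X = ?R `` {x}" "x \<in> Der phi q d e Phi Psi"
    using assms(2) unfolding Ext1_def by (rule quotientE)
  have "ext_smul phi q d e Phi Psi a X = ?R `` {\<lambda>b. tm_mult phi e (Psi a) (x b)}"
    by (simp only: x ext_smul_class[OF hom fixes_Fq Psi a x(2)])
  also have "\<dots> = ?R `` {\<lambda>b. tm_mult phi d (x b) (Phi a)}"
    by (rule equiv_class_eq[OF equiv_ext_rel[OF hom]
          ext_rel_mult_left_right[OF hom fixes_Fq Psi Phi a x(2)]])
  finally have "twisted_dual psi ` ext_smul phi q d e Phi Psi a X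
      = ?R' `` {\<lambda>b. tm_mult psi d (Phi_dual a) (twisted_dual psi x b)}"
    by (simp only: image_dual_class twisted_dual_mult_right[OF hom_psi psi_phi])
  also have "\<dots> = ext_smul psi q e d Psi_dual Phi_dual a (?R' `` {twisted_dual psi x})"
    by (rule ext_smul_class[where q=q, OF hom_psi psi_fixes_Fq
          tmat_rep_twisted_dual[OF hom_psi psi_phi Phi] a Der_dual[OF x(2)], symmetric])
  finally show ?thesis by (simp only: x image_dual_class)
qed

theorem ext_iso_dual: "ext_iso q phi d e Phi Psi psi e d Psi_dual Phi_dual"
  unfolding ext_iso_def
  using bij_betw_image_dual image_dual_ext_add image_dual_ext_smul by blast

end

subsection \<open>The Frobenius\<close>

lemma add_mult_hom_frob:
  assumes "prime CHAR('a::field)" and "q = CHAR('a) ^ m"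
  shows "add_mult_hom (frob q :: 'a \<Rightarrow> 'a)"
  unfolding add_mult_hom_def frob_def
  using freshmans_dream'[OF assms] by (simp add: power_mult_distrib)

lemma frob_prime_power: "frob (p ^ m) = (\<lambda>x. x ^ p) ^^ m"
proof (induction m)
  case (Suc m)
  have "frob (p ^ Suc m) x = (frob (p ^ m) x) ^ p" for x :: 'a
    by (simp add: frob_def power_mult[symmetric] mult.commute)
  then show ?case
    by (simp add: Suc.IH[symmetric] fun_eq_iff)
qed (simp add: frob_def fun_eq_iff)

lemma bij_frob:
  assumes "prime CHAR('a::field)" and "q = CHAR('a) ^ m" and "surj (\<lambda>x::'a. x ^ CHAR('a))"
  shows "bij (frob q :: 'a \<Rightarrow> 'a)"
proof (rule bijI)
  show "inj (frob q :: 'a \<Rightarrow> 'a)"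
  proof (rule injI)
    fix x y :: 'a
    assume "frob q x = frob q y"
    then have "frob q (x - y) = 0"
      by (simp add: add_mult_hom_diff[OF add_mult_hom_frob[OF assms(1,2)]])
    then show "x = y" by (simp add: frob_def)
  qed
  show "surj (frob q :: 'a \<Rightarrow> 'a)"
    using assms(2,3) by (simp add: frob_prime_power)
qed

theorem theorem7p3:
  fixes p q m d e :: nat and \<theta> :: "'a::field"
    and Phi Psi :: "'a poly \<Rightarrow> 'a tmat"
  assumes "prime p" and "CHAR('a) = p"
    and "surj (\<lambda>x::'a. x ^ p)"
    and "m \<ge> 1" and "q = p ^ m" and "card (Fq q :: 'a set) = q"
    and "t_module q \<theta> d Phi" and "t_module q \<theta> e Psi"
  shows "ext_iso q (tw_tau q) d e Phi Psi
                   (tw_sigma q) e d (sigma_dual q Psi) (sigma_dual q Phi)"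
proof -
  have char: "prime CHAR('a)" "q = CHAR('a) ^ m"
    using assms(1,2,5) by simp_all
  have hom: "add_mult_hom (frob q :: 'a \<Rightarrow> 'a)"
    by (rule add_mult_hom_frob[OF char])
  have bij: "bij (frob q :: 'a \<Rightarrow> 'a)"
    using bij_frob[OF char] assms(2,3) by simp
  interpret twisted_duality "frob q" "inv (frob q)" q d e Phi Psi
  proof
    show "inv (frob q) (frob q x) = x" for x :: 'a
      using bij by (simp add: bij_is_inj)
    show "frob q (inv (frob q) x) = x" for x :: 'a
      using bij by (simp add: bij_is_surj surj_f_inv_f)
    show "frob q c = c" if "c \<in> Fq q" for c :: 'a
      using that by (simp add: Fq_def frob_def)
    show "tmat_rep (frob q) q d Phi" and "tmat_rep (frob q) q e Psi"
      using assms(7,8) unfolding t_module_def tw_tau_def by (simp_all add: tw_module_imp_tmat_rep)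
  qed (rule hom)
  show ?thesis
    using ext_iso_dual by (simp only: tw_tau_def tw_sigma_def sigma_dual_eq_twisted_dual)
qed

end
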